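(* Let $d$ be a compatible metric on the Cantor space $\mathbf{C}$ and let $h:\mathbf{C}\to\mathbf{C}$ be an isometry of $(\mathbf{C},d)$. Then for every clopen set $U\subseteq\mathbf{C}$ there exists a positive integer $l$ such that $h^l(U)=U$.
   Context: $\mathbf{C}$ denotes the Cantor space. *)

theory Defs
  imports "HOL-Analysis.Analysis"
begin

definition cantor_space :: "(nat \<Rightarrow> bool) topology" where
  "cantor_space = product_topology (\<lambda>_. discrete_topology (UNIV :: bool set)) UNIV"

definition compatible_metric :: "((nat \<Rightarrow> bool) \<Rightarrow> (nat \<Rightarrow> bool) \<Rightarrow> real) \<Rightarrow> bool" where
  "compatible_metric d \<longleftrightarrow> Metric_space UNIV d \<and> Metric_space.mtopology UNIV d = cantor_space"

end

theory Submission
  imports Defs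
begin

text \<open>A clopen set U of a compact metric space is a union of e-balls for some e > 0, and an
  isometry carries such sets to such sets. By total boundedness a set that is a union of e-balls
  is determined by its trace on a finite e-net, so there are only finitely many of them. Hence
  the images of U under the iterates of h repeat, and injectivity of h turns a repetition
  into a period.\<close>

context Metric_space
begin

definition closed_under_mball :: "real \<Rightarrow> 'a set \<Rightarrow> bool" where
  "closed_under_mball e U \<longleftrightarrow> U \<subseteq> M \<and> (\<forall>x\<in>U. mball x e \<subseteq> U)"

lemma compactin_openin_imp_closed_under_mball:
  assumes "compactin mtopology U" "openin mtopology U"
  obtains e where "e > 0" "closed_under_mball e U"
  using lebesgue_number[OF assms(1), of "{U}"] assms openin_subset
  unfolding closed_under_mball_def by fastforce

lemma closed_under_mball_isometry_image:
  assumes "f ` M = M" "\<And>x y. x \<in> M \<Longrightarrow> y \<in> M \<Longrightarrow> d (f x) (f y) = d x y"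
    and "closed_under_mball e U"
  shows "closed_under_mball e (f ` U)"
proof -
  have "f ` U \<subseteq> M" using assms(1,3) unfolding closed_under_mball_def by blast
  moreover have "z \<in> f ` U" if y: "y \<in> f ` U" and z: "z \<in> mball y e" for y z
  proof -
    obtain a where a: "a \<in> U" "y = f a" using y by blast
    obtain b where b: "b \<in> M" "z = f b" using assms(1) z by (metis imageE in_mball)
    have "a \<in> M" using a(1) assms(3) unfolding closed_under_mball_def by blast
    then have "b \<in> mball a e" using assms(2)[of a b] z a b by simp
    then show "z \<in> f ` U" using a b assms(3) unfolding closed_under_mball_def by blast
  qed
  ultimately show ?thesis unfolding closed_under_mball_def by blast
qed

lemma closed_under_mball_eq_on_net:
  assumes U: "closed_under_mball e U" and V: "closed_under_mball e V"
    and net: "M \<subseteq> (\<Union>n\<in>K. mball n e)" and trace: "U \<inter> K = V \<inter> K"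
  shows "U = V"
proof -
  have "x \<in> B" if A: "closed_under_mball e A" and B: "closed_under_mball e B"
    and "A \<inter> K = B \<inter> K" and "x \<in> A" for A B x
  proof -
    have "x \<in> M" using A \<open>x \<in> A\<close> unfolding closed_under_mball_def by blast
    then obtain n where n: "n \<in> K" "x \<in> mball n e" using net by blast
    then have "n \<in> mball x e" by (auto simp: commute)
    then have "n \<in> B" using A \<open>x \<in> A\<close> n(1) \<open>A \<inter> K = B \<inter> K\<close>
      unfolding closed_under_mball_def by blast
    then show "x \<in> B" using B n(2) unfolding closed_under_mball_def by blast
  qed
  then show ?thesis using U V trace by blast
qed

lemma finite_closed_under_mball:
  assumes "mtotally_bounded M" "e > 0"
  shows "finite {U. closed_under_mball e U}"
proof -
  obtain K where K: "finite K" "M \<subseteq> (\<Union>n\<in>K. mball n e)"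
    using assms unfolding mtotally_bounded_def by blast
  have "inj_on (\<lambda>U. U \<inter> K) {U. closed_under_mball e U}"
    by (rule inj_onI) (use closed_under_mball_eq_on_net[OF _ _ K(2)] in blast)
  then show ?thesis
    by (rule inj_on_finite[where B = "Pow K"]) (use K(1) in auto)
qed

end

lemma funpow_image_recurrent:
  fixes f :: "'a \<Rightarrow> 'a"
  assumes "inj f" and "finite (range (\<lambda>n. (f ^^ n) ` U))"
  shows "\<exists>l>0. (f ^^ l) ` U = U"
proof -
  have "\<not> inj (\<lambda>n. (f ^^ n) ` U)"
  proof
    assume "inj (\<lambda>n. (f ^^ n) ` U)"
    then have "finite (UNIV :: nat set)" using finite_imageD[OF assms(2)] by blast
    then show False by simp
  qed
  then obtain i j where "i < j" and eq: "(f ^^ i) ` U = (f ^^ j) ` U"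
    using linorder_inj_onI'[of UNIV "\<lambda>n. (f ^^ n) ` U"] by blast
  then have "(f ^^ i) ` U = (f ^^ i) ` (f ^^ (j - i)) ` U"
    by (simp add: image_comp funpow_add[symmetric])
  then have "(f ^^ (j - i)) ` U = U"
    by (simp add: inj_image_eq_iff assms(1))
  then show ?thesis using \<open>i < j\<close> by (intro exI[of _ "j - i"]) simp
qed

lemma compact_space_cantor_space: "compact_space cantor_space"
  unfolding cantor_space_def
  by (simp add: compact_space_product_topology compact_space_discrete_topology)

theorem proposition6p2:
  fixes d :: "(nat \<Rightarrow> bool) \<Rightarrow> (nat \<Rightarrow> bool) \<Rightarrow> real"
    and h :: "(nat \<Rightarrow> bool) \<Rightarrow> (nat \<Rightarrow> bool)"
    and U :: "(nat \<Rightarrow> bool) set"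
  assumes "compatible_metric d"
    and "bij h"
    and "\<forall>x y. d (h x) (h y) = d x y"
    and "openin cantor_space U" and "closedin cantor_space U"
  shows "\<exists>l::nat. l > 0 \<and> (h ^^ l) ` U = U"
proof -
  interpret Metric_space UNIV d
    using assms(1) unfolding compatible_metric_def by blast
  have top: "mtopology = cantor_space"
    using assms(1) unfolding compatible_metric_def by blast
  have "compact_space mtopology"
    using compact_space_cantor_space top by simp
  then have "mtotally_bounded UNIV"
    using compactin_imp_mtotally_bounded unfolding compact_space_def by simp
  have "compactin mtopology U" and "openin mtopology U"
    using closedin_compact_space[OF compact_space_cantor_space assms(5)] assms(4) top by simp_all
  then obtain e where "e > 0" and "closed_under_mball e U"
    by (rule compactin_openin_imp_closed_under_mball)
  have iso: "closed_under_mball e (h ` A)" if "closed_under_mball e A" for A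
    using closed_under_mball_isometry_image[OF _ _ that] assms(2,3) bij_is_surj by blast
  have "closed_under_mball e ((h ^^ n) ` U)" for n
  proof (induction n)
    case 0
    show ?case using \<open>closed_under_mball e U\<close> by simp
  next
    case (Suc n)
    then show ?case using iso[of "(h ^^ n) ` U"] by (simp add: image_comp)
  qed
  then have "finite (range (\<lambda>n. (h ^^ n) ` U))"
    by (intro finite_subset[OF _ finite_closed_under_mball[OF \<open>mtotally_bounded UNIV\<close> \<open>e > 0\<close>]]) auto
  then show ?thesis
    using funpow_image_recurrent[OF bij_is_inj[OF assms(2)]] by blast
qed

end
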